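(* Consider $\mathbb{C}$ as a Frobenius algebra over $\mathbb{R}$ with the usual multiplication and unit, comultiplication determined by $\Delta(1)=1\otimes 1-i\otimes i$ (and $\Delta(a)=(a\otimes 1)\Delta(1)$), and counit $\varepsilon(1)=1$, $\varepsilon(i)=0$. Then the extended structures on this Frobenius algebra are exactly: (a) $\phi=\mathrm{id}_{\mathbb{C}}$ and $\theta=\pm\sqrt2$; (b) $\phi(z)=\overline z$ (complex conjugation) and $\theta=0$. Moreover, these three extended Frobenius algebras are pairwise non-isomorphic.
   Context: A Frobenius algebra over a field $K$ is a tuple $(A,m,u,\Delta,\varepsilon)$ where $(A,m,u)$ is an associative unital $K$-algebra and $(A,\Delta,\varepsilon)$ is a coassociative counital $K$-coalgebra satisfying $(a\otimes 1_A)\Delta(b)=\Delta(ab)=\Delta(a)(1_A\otimes b)$. A morphism of Frobenius algebras is both an algebra and coalgebra morphism. An extended structure on $A$ is a pair $(\phi,\theta)$, $\phi:A\to A$ $K$-linear, $\theta\in A$, with: (i) $\phi$ a Frobenius algebra morphism with $\phi^2=\mathrm{id}_A$; (ii) $\phi(\theta a)=\theta a$ for all $a\in A$; (iii) $m(\phi\otimes\mathrm{id}_A)\Delta(1_A)=\theta^2$. A morphism of extended Frobenius algebras $f:(A,\phi_A,\theta_A)\to(B,\phi_B,\theta_B)$ is a Frobenius algebra morphism with $f\phi_A=\phi_Bf$ and $f(\theta_A)=\theta_B$. *)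

theory Defs
  imports Complex_Main
begin

text \<open>Real basis: bas False = 1, bas True = i.  Elements of the real tensor product
  C (x)_R C are represented by their coordinate arrays with respect to the basis
  bas j (x) bas k, i.e. as functions bool => bool => real.\<close>

definition bas :: "bool \<Rightarrow> complex" where
  "bas b = (if b then \<i> else 1)"

definition coord :: "bool \<Rightarrow> complex \<Rightarrow> real" where
  "coord b z = (if b then Im z else Re z)"

type_synonym ctensor = "bool \<Rightarrow> bool \<Rightarrow> real"

definition tens :: "complex \<Rightarrow> complex \<Rightarrow> ctensor" where
  "tens z w = (\<lambda>j k. coord j z * coord k w)"

definition tmap :: "(complex \<Rightarrow> complex) \<Rightarrow> (complex \<Rightarrow> complex) \<Rightarrow> ctensor \<Rightarrow> ctensor" where
  "tmap f g T = (\<lambda>p q. \<Sum>j\<in>UNIV. \<Sum>k\<in>UNIV. T j k * coord p (f (bas j)) * coord q (g (bas k)))"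

definition tmult :: "ctensor \<Rightarrow> complex" where
  "tmult T = (\<Sum>j\<in>UNIV. \<Sum>k\<in>UNIV. complex_of_real (T j k) * (bas j * bas k))"

definition cDelta :: "complex \<Rightarrow> ctensor" where
  "cDelta a = (\<lambda>j k. tens a 1 j k - tens (a * \<i>) \<i> j k)"

definition ceps :: "complex \<Rightarrow> real" where
  "ceps z = Re z"

definition frob_morph :: "(complex \<Rightarrow> complex) \<Rightarrow> bool" where
  "frob_morph f \<longleftrightarrow> linear f
     \<and> (\<forall>a b. f (a * b) = f a * f b) \<and> f 1 = 1
     \<and> (\<forall>a. cDelta (f a) = tmap f f (cDelta a)) \<and> (\<forall>a. ceps (f a) = ceps a)"

definition ext_structure :: "(complex \<Rightarrow> complex) \<Rightarrow> complex \<Rightarrow> bool" where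
  "ext_structure \<phi> \<theta> \<longleftrightarrow> frob_morph \<phi> \<and> \<phi> \<circ> \<phi> = id
     \<and> (\<forall>a. \<phi> (\<theta> * a) = \<theta> * a)
     \<and> tmult (tmap \<phi> id (cDelta 1)) = \<theta>\<^sup>2"

definition ext_morph :: "(complex \<Rightarrow> complex) \<Rightarrow> (complex \<Rightarrow> complex) \<Rightarrow> complex
    \<Rightarrow> (complex \<Rightarrow> complex) \<Rightarrow> complex \<Rightarrow> bool" where
  "ext_morph f \<phi>A \<theta>A \<phi>B \<theta>B \<longleftrightarrow> frob_morph f \<and> f \<circ> \<phi>A = \<phi>B \<circ> f \<and> f \<theta>A = \<theta>B"

definition ext_iso :: "(complex \<Rightarrow> complex) \<Rightarrow> complex \<Rightarrow> (complex \<Rightarrow> complex) \<Rightarrow> complex \<Rightarrow> bool" where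
  "ext_iso \<phi>A \<theta>A \<phi>B \<theta>B \<longleftrightarrow> (\<exists>f g. ext_morph f \<phi>A \<theta>A \<phi>B \<theta>B \<and> ext_morph g \<phi>B \<theta>B \<phi>A \<theta>A
     \<and> g \<circ> f = id \<and> f \<circ> g = id)"

end

theory Submission
  imports Defs
begin

text \<open>A Frobenius endomorphism of \<open>\<complex>\<close> is an \<open>\<real>\<close>-linear ring endomorphism, hence fixes the reals
  and sends \<open>\<i>\<close> to a square root of \<open>-1\<close>: it is the identity or conjugation. Both are
  Frobenius morphisms; condition (ii) kills \<open>\<theta>\<close> for conjugation, and the trace in (iii)
  equals \<open>2\<close> for the identity, forcing \<open>\<theta> = \<plusminus>\<surd>2\<close>. Morphisms fix the real element \<open>\<theta>\<close>,
  so the three structures, whose \<open>\<theta>\<close> are distinct reals, are pairwise non-isomorphic.\<close>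

lemma linear_complex_eq:
  assumes "linear f"
  shows "f z = Re z *\<^sub>R f 1 + Im z *\<^sub>R f \<i>"
proof -
  have "z = Re z *\<^sub>R 1 + Im z *\<^sub>R \<i>"
    by (simp add: complex_eq_iff)
  then have "f z = f (Re z *\<^sub>R 1 + Im z *\<^sub>R \<i>)" by simp
  also have "\<dots> = Re z *\<^sub>R f 1 + Im z *\<^sub>R f \<i>"
    using assms by (simp add: linear_add linear_scale)
  finally show ?thesis .
qed

lemma linear_fixes_of_real:
  assumes "linear f" "f 1 = 1"
  shows "f (complex_of_real r) = complex_of_real r"
  using linear_complex_eq[OF assms(1), of "complex_of_real r"] assms(2)
  by (simp add: scaleR_conv_of_real)

lemma frob_morph_cases:
  assumes "frob_morph f"
  shows "f = id \<or> f = cnj"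
proof -
  have lin: "linear f" and mult: "\<And>a b. f (a * b) = f a * f b" and one: "f 1 = 1"
    using assms unfolding frob_morph_def by auto
  have "f \<i> * f \<i> = -1"
    using mult[of \<i> \<i>] linear_fixes_of_real[OF lin one, of "-1"] by simp
  then have "(f \<i> - \<i>) * (f \<i> + \<i>) = 0"
    by (simp add: algebra_simps)
  then consider "f \<i> = \<i>" | "f \<i> = -\<i>"
    by (auto simp: eq_neg_iff_add_eq_0)
  then show ?thesis
  proof cases
    case 1
    then have "f z = z" for z
      using linear_complex_eq[OF lin, of z] one by (simp add: complex_eq_iff)
    then show ?thesis by auto
  next
    case 2
    then have "f z = cnj z" for z
      using linear_complex_eq[OF lin, of z] one by (simp add: complex_eq_iff)
    then show ?thesis by auto
  qed
qed

lemmas tensor_simps = tmult_def tmap_def UNIV_bool cDelta_def tens_def coord_def bas_def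

lemma frob_morph_id: "frob_morph id"
proof -
  have "cDelta a = tmap id id (cDelta a)" for a
    by (simp add: fun_eq_iff all_bool_eq tensor_simps)
  then show ?thesis
    unfolding frob_morph_def by (simp add: linear_id)
qed

lemma frob_morph_cnj: "frob_morph cnj"
proof -
  have "cDelta (cnj a) = tmap cnj cnj (cDelta a)" for a
    by (simp add: fun_eq_iff all_bool_eq tensor_simps)
  moreover have "linear cnj"
    by (rule linearI) (simp_all add: complex_eq_iff)
  ultimately show ?thesis
    unfolding frob_morph_def by (simp add: ceps_def)
qed

lemma complex_square_eq_two_iff:
  "(\<theta>::complex)\<^sup>2 = 2 \<longleftrightarrow> \<theta> = complex_of_real (sqrt 2) \<or> \<theta> = - complex_of_real (sqrt 2)"
proof -
  have "(complex_of_real (sqrt 2))\<^sup>2 = 2"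
    by (metis of_real_numeral of_real_power real_sqrt_pow2 zero_le_numeral)
  then have "\<theta>\<^sup>2 = 2 \<longleftrightarrow> (\<theta> - complex_of_real (sqrt 2)) * (\<theta> + complex_of_real (sqrt 2)) = 0"
    by (simp add: algebra_simps power2_eq_square)
  then show ?thesis
    by (auto simp: eq_neg_iff_add_eq_0)
qed

lemma ext_structure_id_iff:
  "ext_structure id \<theta> \<longleftrightarrow> \<theta> = complex_of_real (sqrt 2) \<or> \<theta> = - complex_of_real (sqrt 2)"
proof -
  have "tmult (tmap id id (cDelta 1)) = 2"
    by (simp add: tensor_simps)
  then show ?thesis
    unfolding ext_structure_def using frob_morph_id complex_square_eq_two_iff by auto
qed

lemma ext_structure_cnj_iff: "ext_structure cnj \<theta> \<longleftrightarrow> \<theta> = 0"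
proof -
  have "tmult (tmap cnj id (cDelta 1)) = 0"
    by (simp add: tensor_simps)
  moreover have "cnj \<circ> cnj = id"
    by (simp add: fun_eq_iff)
  moreover have "(\<forall>a. cnj (\<theta> * a) = \<theta> * a) \<Longrightarrow> \<theta> = 0"
    by (frule spec[of _ 1], drule spec[of _ \<i>]) (simp add: complex_eq_iff)
  ultimately show ?thesis
    unfolding ext_structure_def using frob_morph_cnj by auto
qed

lemma ext_morph_fixes_of_real:
  assumes "ext_morph f \<phi>A (complex_of_real r) \<phi>B \<theta>B"
  shows "\<theta>B = complex_of_real r"
  using assms linear_fixes_of_real[of f r] unfolding ext_morph_def frob_morph_def by auto

lemma not_ext_iso_of_real:
  assumes "\<theta>B \<noteq> complex_of_real r"
  shows "\<not> ext_iso \<phi>A (complex_of_real r) \<phi>B \<theta>B"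
  using assms ext_morph_fixes_of_real unfolding ext_iso_def by blast

theorem mainTheorem3:
  shows "(\<forall>\<phi> \<theta>. ext_structure \<phi> \<theta> \<longleftrightarrow>
            (\<phi> = id \<and> (\<theta> = complex_of_real (sqrt 2) \<or> \<theta> = - complex_of_real (sqrt 2)))
          \<or> (\<phi> = cnj \<and> \<theta> = 0))
    \<and> \<not> ext_iso id (complex_of_real (sqrt 2)) id (- complex_of_real (sqrt 2))
    \<and> \<not> ext_iso id (complex_of_real (sqrt 2)) cnj 0
    \<and> \<not> ext_iso id (- complex_of_real (sqrt 2)) cnj 0"
proof (intro conjI allI)
  fix \<phi> \<theta>
  have "ext_structure \<phi> \<theta> \<Longrightarrow> \<phi> = id \<or> \<phi> = cnj"
    unfolding ext_structure_def using frob_morph_cases by blast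
  then show "ext_structure \<phi> \<theta> \<longleftrightarrow>
            (\<phi> = id \<and> (\<theta> = complex_of_real (sqrt 2) \<or> \<theta> = - complex_of_real (sqrt 2)))
          \<or> (\<phi> = cnj \<and> \<theta> = 0)"
    using ext_structure_id_iff ext_structure_cnj_iff by auto
next
  show "\<not> ext_iso id (complex_of_real (sqrt 2)) id (- complex_of_real (sqrt 2))"
    by (rule not_ext_iso_of_real) simp
  show "\<not> ext_iso id (complex_of_real (sqrt 2)) cnj 0"
    by (rule not_ext_iso_of_real) simp
  show "\<not> ext_iso id (- complex_of_real (sqrt 2)) cnj 0"
    using not_ext_iso_of_real[of 0 "- sqrt 2"] by simp
qed

end
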